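(* Let $(X,d)$ be a metric space and let $T,f,g:X\to X$ be selfmaps such that $T$ is $(f,g)$-weakly contractive, i.e. there exists $\psi\in\Psi$ with \[d(Tx,Ty)\leq\min\{d(fx,gy)-\psi(d(fx,gy)),\ d(gx,fy)-\psi(d(gx,fy))\}\quad\text{for all }x,y\in X.\] Suppose the pairs $(T,f)$ and $(T,g)$ are weakly compatible, $\overline{T(X)}\subseteq f(X)$, $\overline{T(X)}\subseteq g(X)$, and $\overline{T(X)}$ is a complete subspace of $X$. Then $T$, $f$ and $g$ have a unique common fixed point in $X$.
   Context: $R_+=[0,\infty)$. $\Psi$ denotes the set of all functions $\psi:R_+\to R_+$ that are continuous and nondecreasing on $R_+$, with $\psi(t)>0$ for $t>0$, $\psi(0)=0$ and $\lim_{t\to\infty}\psi(t)=\infty$. A pair $(T,f)$ of selfmaps of $X$ is weakly compatible if $T$ and $f$ commute at their coincidence points, i.e. $Tx=fx$ implies $T(fx)=f(Tx)$. $\overline{T(X)}$ is the closure of $T(X)$ in $X$. *)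

theory Defs
  imports "HOL-Analysis.Analysis"
begin

definition Psi :: "(real \<Rightarrow> real) set" where
  "Psi = {\<psi>. (\<forall>t\<ge>0. \<psi> t \<ge> 0) \<and> continuous_on {0..} \<psi> \<and> mono_on {0..} \<psi>
              \<and> (\<forall>t>0. \<psi> t > 0) \<and> \<psi> 0 = 0 \<and> filterlim \<psi> at_top at_top}"

definition weakly_compatible :: "('a \<Rightarrow> 'a) \<Rightarrow> ('a \<Rightarrow> 'a) \<Rightarrow> bool" where
  "weakly_compatible T f \<longleftrightarrow> (\<forall>x. T x = f x \<longrightarrow> T (f x) = f (T x))"

definition fg_weakly_contractive ::
  "('a::metric_space \<Rightarrow> 'a) \<Rightarrow> ('a \<Rightarrow> 'a) \<Rightarrow> ('a \<Rightarrow> 'a) \<Rightarrow> bool" where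
  "fg_weakly_contractive T f g \<longleftrightarrow> (\<exists>\<psi>\<in>Psi. \<forall>x y.
     dist (T x) (T y) \<le> min (dist (f x) (g y) - \<psi> (dist (f x) (g y)))
                              (dist (g x) (f y) - \<psi> (dist (g x) (f y))))"

end

theory Submission
  imports Defs
begin

text \<open>Since \<open>f\<close> and \<open>g\<close> map onto \<open>C = closure (range T)\<close>, one can set \<open>S p = T x\<close> for
  any \<open>x\<close> with \<open>f x = p\<close>: the contraction condition with \<open>f x = g y\<close> forces \<open>T x = T y\<close>,
  and it turns into Rhoades' condition \<open>d(S p, S q) \<le> d(p, q) - \<psi>(d(p, q))\<close> on \<open>C\<close>.
  The orbits of \<open>S\<close> are Cauchy, so completeness of \<open>C\<close> yields \<open>z = S z\<close>, i.e. points
  \<open>u, v\<close> with \<open>T u = f u = z = T v = g v\<close>. Weak compatibility gives \<open>T z = f z = g z\<close>,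
  and one more application of the contraction condition forces \<open>T z = z\<close>, as well as
  the equality of any two common fixed points.\<close>

lemma Psi_pos: "\<psi> \<in> Psi \<Longrightarrow> t > 0 \<Longrightarrow> \<psi> t > 0"
  and Psi_nonneg: "\<psi> \<in> Psi \<Longrightarrow> t \<ge> 0 \<Longrightarrow> \<psi> t \<ge> 0"
  and Psi_0: "\<psi> \<in> Psi \<Longrightarrow> \<psi> 0 = 0"
  and Psi_mono: "\<psi> \<in> Psi \<Longrightarrow> 0 \<le> s \<Longrightarrow> s \<le> t \<Longrightarrow> \<psi> s \<le> \<psi> t"
  unfolding Psi_def mono_on_def by auto

lemma Psi_le_diff_imp_eq_0:
  assumes "\<psi> \<in> Psi" "d \<ge> 0" "d \<le> d - \<psi> d"
  shows "d = 0"
  using assms Psi_pos[of \<psi> d] by linarith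

lemma Psi_descent_gets_small:
  fixes d :: "nat \<Rightarrow> real"
  assumes "\<psi> \<in> Psi" and descent: "\<And>n. d (Suc n) \<le> d n - \<psi> (d n)" and "\<delta> > 0"
  shows "\<exists>N. d N < \<delta>"
proof (rule ccontr)
  assume "\<not> ?thesis"
  hence ge: "d n \<ge> \<delta>" for n by (simp add: not_less)
  have bound: "d n \<le> d 0 - real n * \<psi> \<delta>" for n
  proof (induction n)
    case 0
    then show ?case by simp
  next
    case (Suc n)
    have "\<psi> \<delta> \<le> \<psi> (d n)" using Psi_mono[OF assms(1)] ge[of n] \<open>\<delta> > 0\<close> by simp
    with descent[of n] Suc show ?case by (simp add: algebra_simps)
  qed
  obtain n where "real n * \<psi> \<delta> > d 0"
    using reals_Archimedean3[OF Psi_pos[OF assms(1,3)]] by blast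
  with bound[of n] ge[of n] \<open>\<delta> > 0\<close> show False by linarith
qed

locale weakly_contractive_on =
  fixes \<psi> :: "real \<Rightarrow> real" and C :: "'a::metric_space set" and S :: "'a \<Rightarrow> 'a"
  assumes Psi: "\<psi> \<in> Psi"
    and maps_into: "S ` C \<subseteq> C"
    and contractive: "\<And>p q. p \<in> C \<Longrightarrow> q \<in> C \<Longrightarrow> dist (S p) (S q) \<le> dist p q - \<psi> (dist p q)"
begin

lemma nonexpansive: "p \<in> C \<Longrightarrow> q \<in> C \<Longrightarrow> dist (S p) (S q) \<le> dist p q"
  using contractive[of p q] Psi_nonneg[OF Psi, of "dist p q"] by simp

lemma funpow_in: "x \<in> C \<Longrightarrow> (S ^^ n) x \<in> C"
  by (induction n) (use maps_into in auto)

text \<open>Far from \<open>x\<close> the gain \<open>\<psi>(\<epsilon>/2)\<close> of the contraction absorbs the step \<open>d(x, S x)\<close>;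
  near \<open>x\<close> nonexpansiveness suffices.\<close>

lemma dist_orbit_le:
  assumes "x \<in> C" "\<epsilon> > 0" and step: "dist x (S x) \<le> min (\<psi> (\<epsilon>/2)) (\<epsilon>/2)"
  shows "dist ((S ^^ n) x) x \<le> \<epsilon>"
proof (induction n)
  case 0
  then show ?case using \<open>\<epsilon> > 0\<close> by simp
next
  case (Suc n)
  let ?y = "(S ^^ n) x"
  have y: "?y \<in> C" using funpow_in[OF \<open>x \<in> C\<close>] .
  have tri: "dist ((S ^^ Suc n) x) x \<le> dist (S ?y) (S x) + dist x (S x)"
    using dist_triangle[of "S ?y" x "S x"] by (simp add: dist_commute)
  show ?case
  proof (cases "dist ?y x \<ge> \<epsilon>/2")
    case True
    then have "\<psi> (\<epsilon>/2) \<le> \<psi> (dist ?y x)"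
      using Psi_mono[OF Psi] \<open>\<epsilon> > 0\<close> by simp
    then show ?thesis using tri contractive[OF y \<open>x \<in> C\<close>] Suc.IH step by linarith
  next
    case False
    then show ?thesis using tri nonexpansive[OF y \<open>x \<in> C\<close>] step by linarith
  qed
qed

lemma orbit_Cauchy:
  assumes "x \<in> C"
  shows "Cauchy (\<lambda>n. (S ^^ n) x)"
proof (rule metric_CauchyI)
  fix e :: real
  assume "e > 0"
  define \<epsilon> where "\<epsilon> = e / 3"
  define d where "d n = dist ((S ^^ n) x) ((S ^^ Suc n) x)" for n
  have "\<epsilon> > 0" using \<open>e > 0\<close> by (simp add: \<epsilon>_def)
  then have "min (\<psi> (\<epsilon>/2)) (\<epsilon>/2) > 0"
    using Psi_pos[OF Psi] by simp
  moreover have "d (Suc n) \<le> d n - \<psi> (d n)" for n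
    using contractive[OF funpow_in funpow_in, OF \<open>x \<in> C\<close> \<open>x \<in> C\<close>, of n "Suc n"]
    by (simp add: d_def)
  ultimately obtain N where "d N < min (\<psi> (\<epsilon>/2)) (\<epsilon>/2)"
    using Psi_descent_gets_small[OF Psi] by blast
  then have N: "dist ((S ^^ N) x) (S ((S ^^ N) x)) \<le> min (\<psi> (\<epsilon>/2)) (\<epsilon>/2)"
    by (simp add: d_def)
  have near: "dist ((S ^^ n) x) ((S ^^ N) x) \<le> \<epsilon>" if "n \<ge> N" for n
  proof -
    have "(S ^^ n) x = (S ^^ (n - N)) ((S ^^ N) x)"
      using that by (metis funpow_add le_add_diff_inverse2 o_apply)
    then show ?thesis
      using dist_orbit_le[OF funpow_in[OF \<open>x \<in> C\<close>] \<open>\<epsilon> > 0\<close> N] by simp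
  qed
  show "\<exists>M. \<forall>m\<ge>M. \<forall>n\<ge>M. dist ((S ^^ m) x) ((S ^^ n) x) < e"
  proof (intro exI allI impI)
    fix m n
    assume "m \<ge> N" "n \<ge> N"
    then show "dist ((S ^^ m) x) ((S ^^ n) x) < e"
      using near[of m] near[of n] dist_triangle[of "(S ^^ m) x" "(S ^^ n) x" "(S ^^ N) x"]
        \<open>\<epsilon> > 0\<close> by (simp add: \<epsilon>_def dist_commute)
  qed
qed

lemma fixpoint_exists:
  assumes "complete C" "C \<noteq> {}"
  shows "\<exists>z\<in>C. S z = z"
proof -
  obtain x where "x \<in> C" using assms(2) by blast
  define y where "y = (\<lambda>n. (S ^^ n) x)"
  have y_in: "y n \<in> C" for n using funpow_in[OF \<open>x \<in> C\<close>] by (simp add: y_def)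
  have "Cauchy y" using orbit_Cauchy[OF \<open>x \<in> C\<close>] unfolding y_def .
  then obtain z where "z \<in> C" and lim: "y \<longlonglongrightarrow> z"
    using assms(1) y_in complete_def by blast
  have "continuous_on C S"
    by (rule lipschitz_on_continuous_on[of 1]) (rule lipschitz_onI, simp_all add: nonexpansive)
  then have "(\<lambda>n. S (y n)) \<longlonglongrightarrow> S z"
    using continuous_on_tendsto_compose[OF _ lim \<open>z \<in> C\<close>] y_in by simp
  moreover have "(\<lambda>n. S (y n)) \<longlonglongrightarrow> z"
    using LIMSEQ_Suc[OF lim] by (simp add: y_def)
  ultimately show ?thesis using LIMSEQ_unique \<open>z \<in> C\<close> by blast
qed

end

lemma fg_weakly_contractiveE:
  assumes "fg_weakly_contractive T f g"
  obtains \<psi> where "\<psi> \<in> Psi"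
    and "\<And>x y. dist (T x) (T y) \<le> dist (f x) (g y) - \<psi> (dist (f x) (g y))"
    and "\<And>x y. dist (T x) (T y) \<le> dist (g x) (f y) - \<psi> (dist (g x) (f y))"
  using assms unfolding fg_weakly_contractive_def by (meson min.boundedE)

lemma fg_weakly_contractive_eq:
  assumes "fg_weakly_contractive T f g" "f x = g y"
  shows "T x = T y"
proof -
  obtain \<psi> where psi: "\<psi> \<in> Psi"
    and K1: "\<And>x y. dist (T x) (T y) \<le> dist (f x) (g y) - \<psi> (dist (f x) (g y))"
    and "\<And>x y. dist (T x) (T y) \<le> dist (g x) (f y) - \<psi> (dist (g x) (f y))"
    using assms(1) by (rule fg_weakly_contractiveE) blast
  show ?thesis using K1[of x y] assms(2) Psi_0[OF psi] by simp
qed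

lemma fg_weakly_contractive_coincidence:
  assumes contr: "fg_weakly_contractive T f g"
    and onto_f: "closure (range T) \<subseteq> range f" and onto_g: "closure (range T) \<subseteq> range g"
    and "complete (closure (range T))"
  obtains z u v where "T u = z" "f u = z" "T v = z" "g v = z"
proof -
  define C where "C = closure (range T)"
  obtain \<psi> where "\<psi> \<in> Psi"
    and K1: "\<And>x y. dist (T x) (T y) \<le> dist (f x) (g y) - \<psi> (dist (f x) (g y))"
    and "\<And>x y. dist (T x) (T y) \<le> dist (g x) (f y) - \<psi> (dist (g x) (f y))"
    using contr by (rule fg_weakly_contractiveE) blast
  define a where "a = inv_into UNIV f"
  define b where "b = inv_into UNIV g"
  have f_a: "f (a p) = p" if "p \<in> C" for p
    using that onto_f unfolding a_def C_def by (meson f_inv_into_f subsetD)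
  have g_b: "g (b p) = p" if "p \<in> C" for p
    using that onto_g unfolding b_def C_def by (meson f_inv_into_f subsetD)
  have T_a_b: "T (a p) = T (b p)" if "p \<in> C" for p
    using fg_weakly_contractive_eq[OF contr] f_a[OF that] g_b[OF that] by simp
  interpret weakly_contractive_on \<psi> C "T \<circ> a"
  proof
    show "(T \<circ> a) ` C \<subseteq> C" using closure_subset[of "range T"] by (auto simp: C_def)
    show "dist ((T \<circ> a) p) ((T \<circ> a) q) \<le> dist p q - \<psi> (dist p q)" if "p \<in> C" "q \<in> C" for p q
      using K1[of "a p" "b q"] T_a_b[OF that(2)] f_a[OF that(1)] g_b[OF that(2)] by simp
  qed fact
  have "C \<noteq> {}" using closure_subset unfolding C_def by blast
  then obtain z where "z \<in> C" "T (a z) = z"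
    using fixpoint_exists assms(4) unfolding C_def by auto
  then show ?thesis
    using that[of "a z" z "b z"] f_a g_b T_a_b by metis
qed

lemma fg_weakly_contractive_fixpoint:
  assumes "fg_weakly_contractive T f g" "T u = z" "f u = z" "g z = T z"
  shows "T z = z"
proof -
  obtain \<psi> where psi: "\<psi> \<in> Psi"
    and "\<And>x y. dist (T x) (T y) \<le> dist (f x) (g y) - \<psi> (dist (f x) (g y))"
    and K2: "\<And>x y. dist (T x) (T y) \<le> dist (g x) (f y) - \<psi> (dist (g x) (f y))"
    using assms(1) by (rule fg_weakly_contractiveE) blast
  have "dist (T z) z = 0"
    using Psi_le_diff_imp_eq_0[OF psi, of "dist (T z) z"] K2[of z u] assms(2-4) by simp
  then show ?thesis by simp
qed

lemma fg_weakly_contractive_common_fixpoint_unique: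
  assumes "fg_weakly_contractive T f g" "T w = w" "f w = w" "T z = z" "g z = z"
  shows "w = z"
proof -
  obtain \<psi> where psi: "\<psi> \<in> Psi"
    and K1: "\<And>x y. dist (T x) (T y) \<le> dist (f x) (g y) - \<psi> (dist (f x) (g y))"
    and "\<And>x y. dist (T x) (T y) \<le> dist (g x) (f y) - \<psi> (dist (g x) (f y))"
    using assms(1) by (rule fg_weakly_contractiveE) blast
  have "dist w z = 0"
    using Psi_le_diff_imp_eq_0[OF psi, of "dist w z"] K1[of w z] assms(2-5) by simp
  then show ?thesis by simp
qed

theorem theorem2p1:
  fixes T f g :: "'a::metric_space \<Rightarrow> 'a"
  assumes "fg_weakly_contractive T f g"
    and "weakly_compatible T f" and "weakly_compatible T g"
    and "closure (range T) \<subseteq> range f" and "closure (range T) \<subseteq> range g"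
    and "complete (closure (range T))"
  shows "\<exists>!z. T z = z \<and> f z = z \<and> g z = z"
proof -
  obtain z u v where u: "T u = z" "f u = z" and v: "T v = z" "g v = z"
    using fg_weakly_contractive_coincidence[OF assms(1,4-6)] .
  have "T z = f z" using assms(2) u unfolding weakly_compatible_def by metis
  moreover have "T z = g z" using assms(3) v unfolding weakly_compatible_def by metis
  moreover have "T z = z"
    using fg_weakly_contractive_fixpoint[OF assms(1) u] \<open>T z = g z\<close> by simp
  ultimately show ?thesis
    using fg_weakly_contractive_common_fixpoint_unique[OF assms(1)] by metis
qed

end
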